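(* Let $\mathbf i$ be a reduced expression of $w_0$ whose standard seed satisfies properties (A), (B) and (C). Then for every $j\in J_{ex}(\mathbf i)$, $$\beta_jP_{\mathrm{in}(j)}=\beta_{j_+(\mathbf i)}P_{\mathrm{out}(j)}.$$
   Context: $\mathfrak g$ is a complex simple Lie algebra of simply-laced type, vertex set $I=\{1,\dots,n\}$, Cartan entries $i\cdot j$, Weyl group with simple reflections $s_i$, longest element $w_0$, $N=\ell(w_0)$, fundamental weights $\omega_i$. $\overline D:\mathbb C[\mathsf N]\to\mathbb C(\alpha_1,\dots,\alpha_n)$ is the algebra morphism $\overline D(f)=\sum_{\mathbf j}(f,e_{j_1}\cdots e_{j_r})\big(\alpha_{j_1}(\alpha_{j_1}+\alpha_{j_2})\cdots(\alpha_{j_1}+\dots+\alpha_{j_r})\big)^{-1}$ ($\mathbb C[\mathsf N]$ identified with the graded dual of $U(\mathfrak n)$, $e_i$ Chevalley generators, $\alpha_i$ indeterminates). Positive roots are linear forms in the $\alpha_i$; $(\beta;P)$ = multiplicity of $\beta$ in $P$. For a reduced expression $\mathbf i$: $\beta_j=s_{i_1}\cdots s_{i_{j-1}}(\alpha_{i_j})$; $j_-(\mathbf i)=\max(\{l<j:i_l=i_j\}\cup\{0\})$; $j_+(\mathbf i)=\min(\{l>j:i_l=i_j\}\cup\{N+1\})$; $J_{ex}(\mathbf i)=\{j:j_+(\mathbf i)\le N\}$; $x_j=D(s_{i_1}\cdots s_{i_j}\omega_{i_j},\omega_{i_j})$ are the flag minors (cluster variables of the standard seed). The quiver $Q^{\mathbf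 i}$ on $\{1,\dots,N\}$ has an (ordinary) arrow $u\to v$ iff $i_u\cdot i_v=-1$ and $u<v<u_+<v_+$, and a (horizontal) arrow $u_+\to u$ for each $u\in J_{ex}$. For $j\in J_{ex}$ let $\mathrm{inord}(j)$ (resp. $\mathrm{outord}(j)$) be the set of sources (resp. targets) of ordinary arrows into (resp. out of) $j$; set $P_{\mathrm{in}(j)}:=P_{j_+}\prod_{l\in\mathrm{inord}(j)}P_l$ and $P_{\mathrm{out}(j)}:=P_{j_-}\prod_{l\in\mathrm{outord}(j)}P_l$ with $P_0:=1$. Properties: (A) $\overline D(x_j)=1/P_j$ with $P_j$ a product of positive roots, for all $j$; (B) $P_jP_{j_-}=\beta_j\prod_{l<j<l_+,\,i_l\cdot i_j=-1}P_l$ for all $j$, with $P_0=1$; (C) $(\beta_i;P_j)-(\beta_i;P_{j_+})\le1$ for all $j\in J_{ex}$, $1\le i\le N$. *)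

theory Defs
  imports Main "HOL-Library.Multiset"
begin

text \<open>Weights/roots are integer coefficient vectors w.r.t. the simple roots alpha_1..alpha_n
  (i.e. linear forms in the alpha_i), represented as functions nat => int.\<close>

type_synonym lform = "nat \<Rightarrow> int"

definition simply_laced_simple_cartan :: "nat \<Rightarrow> (nat \<Rightarrow> nat \<Rightarrow> int) \<Rightarrow> bool" where
  "simply_laced_simple_cartan n C \<longleftrightarrow>
     n \<ge> 1 \<and>
     (\<forall>i\<in>{1..n}. C i i = 2) \<and>
     (\<forall>i\<in>{1..n}. \<forall>j\<in>{1..n}. i \<noteq> j \<longrightarrow> C i j = C j i \<and> (C i j = 0 \<or> C i j = -1)) \<and>
     (\<forall>v::lform. (\<forall>k. k \<notin> {1..n} \<longrightarrow> v k = 0) \<longrightarrow> v \<noteq> (\<lambda>_. 0) \<longrightarrow>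
        (\<Sum>i\<in>{1..n}. \<Sum>j\<in>{1..n}. v i * C i j * v j) > 0) \<and>
     (\<forall>S. S \<subseteq> {1..n} \<longrightarrow> S \<noteq> {} \<longrightarrow> (\<forall>i\<in>S. \<forall>j\<in>{1..n} - S. C i j = 0) \<longrightarrow> S = {1..n})"

definition simple_root :: "nat \<Rightarrow> lform" where
  "simple_root i = (\<lambda>k. if k = i then 1 else 0)"

text \<open>simple reflection s_i(v) = v - <v, alpha_i^vee> alpha_i\<close>
definition refl :: "nat \<Rightarrow> (nat \<Rightarrow> nat \<Rightarrow> int) \<Rightarrow> nat \<Rightarrow> lform \<Rightarrow> lform" where
  "refl n C i v = (\<lambda>k. if k = i then v k - (\<Sum>l\<in>{1..n}. v l * C l i) else v k)"

definition act :: "nat \<Rightarrow> (nat \<Rightarrow> nat \<Rightarrow> int) \<Rightarrow> nat list \<Rightarrow> lform \<Rightarrow> lform" where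
  "act n C ws = foldr (\<lambda>i f. refl n C i \<circ> f) ws id"

definition weyl_len :: "nat \<Rightarrow> (nat \<Rightarrow> nat \<Rightarrow> int) \<Rightarrow> (lform \<Rightarrow> lform) \<Rightarrow> nat" where
  "weyl_len n C w = (LEAST k. \<exists>ws. set ws \<subseteq> {1..n} \<and> length ws = k \<and> act n C ws = w)"

definition reduced_w0 :: "nat \<Rightarrow> (nat \<Rightarrow> nat \<Rightarrow> int) \<Rightarrow> nat list \<Rightarrow> bool" where
  "reduced_w0 n C ws \<longleftrightarrow> set ws \<subseteq> {1..n} \<and> weyl_len n C (act n C ws) = length ws \<and>
     (\<forall>u. set u \<subseteq> {1..n} \<longrightarrow> weyl_len n C (act n C u) \<le> length ws)"

definition roots :: "nat \<Rightarrow> (nat \<Rightarrow> nat \<Rightarrow> int) \<Rightarrow> lform set" where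
  "roots n C = {act n C ws (simple_root i) | ws i. set ws \<subseteq> {1..n} \<and> i \<in> {1..n}}"

definition pos_roots :: "nat \<Rightarrow> (nat \<Rightarrow> nat \<Rightarrow> int) \<Rightarrow> lform set" where
  "pos_roots n C = {b \<in> roots n C. \<forall>k. b k \<ge> 0}"

text \<open>positions are 1-based: letter ws j = i_j\<close>
definition letter :: "nat list \<Rightarrow> nat \<Rightarrow> nat" where
  "letter ws j = ws ! (j - 1)"

definition beta :: "nat \<Rightarrow> (nat \<Rightarrow> nat \<Rightarrow> int) \<Rightarrow> nat list \<Rightarrow> nat \<Rightarrow> lform" where
  "beta n C ws j = act n C (take (j - 1) ws) (simple_root (letter ws j))"

definition jminus :: "nat list \<Rightarrow> nat \<Rightarrow> nat" where
  "jminus ws j = Max ({l. 1 \<le> l \<and> l < j \<and> letter ws l = letter ws j} \<union> {0})"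

definition jplus :: "nat list \<Rightarrow> nat \<Rightarrow> nat" where
  "jplus ws j = Min ({l. j < l \<and> l \<le> length ws \<and> letter ws l = letter ws j} \<union> {length ws + 1})"

definition Jex :: "nat list \<Rightarrow> nat set" where
  "Jex ws = {j. 1 \<le> j \<and> j \<le> length ws \<and> jplus ws j \<le> length ws}"

definition ord_arrow :: "(nat \<Rightarrow> nat \<Rightarrow> int) \<Rightarrow> nat list \<Rightarrow> nat \<Rightarrow> nat \<Rightarrow> bool" where
  "ord_arrow C ws u v \<longleftrightarrow> u \<in> {1..length ws} \<and> v \<in> {1..length ws} \<and>
     C (letter ws u) (letter ws v) = -1 \<and> u < v \<and> v < jplus ws u \<and> jplus ws u < jplus ws v"

text \<open>Products of positive roots are represented as multisets of positive roots
  (multiplication = multiset sum, 1 = empty multiset); P_0 := 1.\<close>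
definition Pext :: "(nat \<Rightarrow> lform multiset) \<Rightarrow> nat \<Rightarrow> lform multiset" where
  "Pext P j = (if j = 0 then {#} else P j)"

definition P_in :: "(nat \<Rightarrow> nat \<Rightarrow> int) \<Rightarrow> nat list \<Rightarrow> (nat \<Rightarrow> lform multiset) \<Rightarrow> nat \<Rightarrow> lform multiset" where
  "P_in C ws P j = P (jplus ws j) + (\<Sum>l\<in>{u. ord_arrow C ws u j}. P l)"

definition P_out :: "(nat \<Rightarrow> nat \<Rightarrow> int) \<Rightarrow> nat list \<Rightarrow> (nat \<Rightarrow> lform multiset) \<Rightarrow> nat \<Rightarrow> lform multiset" where
  "P_out C ws P j = Pext P (jminus ws j) + (\<Sum>l\<in>{v. ord_arrow C ws j v}. P l)"

end

theory Submission
  imports Defs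
begin

(*
  Relations (B) at j and at j+ share the factor P_j, since (j+)- = j.  Their right-hand
  products run over the positions l, with i_l adjacent to i_j = i_{j+}, such that
  l < j < l+ resp. l < j+ < l+.  Both index sets contain those l with l < j and j+ < l+;
  what remains are exactly the sources of ordinary arrows into j resp. the targets of
  ordinary arrows out of j.  Cancelling the common factors of the two relations gives
  the exchange relation.
*)

lemma finite_jplus_candidates:
  "finite ({l. j < l \<and> l \<le> length ws \<and> letter ws l = letter ws j} \<union> {length ws + 1})"
  by (auto intro: finite_subset[of _ "{..length ws}"])

lemma jplus_gt:
  assumes "jplus ws j \<le> length ws"
  shows "j < jplus ws j"
  using Min_in[OF finite_jplus_candidates, of j ws] assms unfolding jplus_def by auto

lemma letter_jplus:
  assumes "jplus ws j \<le> length ws"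
  shows "letter ws (jplus ws j) = letter ws j"
  using Min_in[OF finite_jplus_candidates, of j ws] assms unfolding jplus_def by auto

lemma jplus_le:
  assumes "j < k" "k \<le> length ws" "letter ws k = letter ws j"
  shows "jplus ws j \<le> k"
  using Min_le[OF finite_jplus_candidates, of k j ws] assms unfolding jplus_def by blast

lemma jminus_jplus:
  assumes "1 \<le> j" "jplus ws j \<le> length ws"
  shows "jminus ws (jplus ws j) = j"
  unfolding jminus_def
proof (rule Max_eqI)
  show "finite ({l. 1 \<le> l \<and> l < jplus ws j \<and> letter ws l = letter ws (jplus ws j)} \<union> {0})"
    by (auto intro: finite_subset[of _ "{..jplus ws j}"])
  show "j \<in> {l. 1 \<le> l \<and> l < jplus ws j \<and> letter ws l = letter ws (jplus ws j)} \<union> {0}"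
    using assms jplus_gt[of ws j] letter_jplus[of ws j] by auto
next
  fix l assume "l \<in> {l. 1 \<le> l \<and> l < jplus ws j \<and> letter ws l = letter ws (jplus ws j)} \<union> {0}"
  then show "l \<le> j"
    using assms letter_jplus[of ws j] jplus_le[of j l ws] by (cases "j < l") auto
qed

definition crossing :: "(nat \<Rightarrow> nat \<Rightarrow> int) \<Rightarrow> nat list \<Rightarrow> nat \<Rightarrow> nat set" where
  "crossing C ws j = {l. 1 \<le> l \<and> l \<le> length ws \<and> l < j \<and> j < jplus ws l \<and>
                         C (letter ws l) (letter ws j) = -1}"

lemma finite_crossing: "finite (crossing C ws j)"
  unfolding crossing_def by (auto intro: finite_subset[of _ "{..length ws}"])

lemma crossing_split_in:
  assumes j: "j \<in> Jex ws" and diag: "C (letter ws j) (letter ws j) \<noteq> -1"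
  shows "crossing C ws j = (crossing C ws j \<inter> crossing C ws (jplus ws j)) \<union> {u. ord_arrow C ws u j}"
proof (intro equalityI subsetI)
  fix l assume l: "l \<in> crossing C ws j"
  have jp: "j < jplus ws j" "jplus ws j \<le> length ws" "letter ws (jplus ws j) = letter ws j"
    using j jplus_gt letter_jplus unfolding Jex_def by auto
  have "jplus ws l \<noteq> jplus ws j"
  proof
    assume "jplus ws l = jplus ws j"
    then have "letter ws l = letter ws j" using jp letter_jplus by metis
    then show False using l diag unfolding crossing_def by simp
  qed
  then consider "jplus ws l < jplus ws j" | "jplus ws j < jplus ws l" by linarith
  then show "l \<in> (crossing C ws j \<inter> crossing C ws (jplus ws j)) \<union> {u. ord_arrow C ws u j}"
  proof cases
    case 1
    then show ?thesis using l j unfolding crossing_def ord_arrow_def Jex_def by auto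
  next
    case 2
    then show ?thesis using l jp unfolding crossing_def by auto
  qed
qed (auto simp: crossing_def ord_arrow_def)

lemma crossing_jplus_split_out:
  assumes j: "j \<in> Jex ws" and diag: "C (letter ws j) (letter ws j) \<noteq> -1"
    and sym: "\<And>l. l \<in> {1..length ws} \<Longrightarrow> C (letter ws l) (letter ws j) = C (letter ws j) (letter ws l)"
  shows "crossing C ws (jplus ws j) =
           (crossing C ws j \<inter> crossing C ws (jplus ws j)) \<union> {v. ord_arrow C ws j v}"
proof -
  have jp: "j < jplus ws j" "jplus ws j \<le> length ws" "letter ws (jplus ws j) = letter ws j"
    using j jplus_gt letter_jplus unfolding Jex_def by auto
  show ?thesis
  proof (intro equalityI subsetI)
    fix l assume l: "l \<in> crossing C ws (jplus ws j)"
    then have "l \<noteq> j" using diag jp unfolding crossing_def by auto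
    then consider "l < j" | "j < l" by linarith
    then show "l \<in> (crossing C ws j \<inter> crossing C ws (jplus ws j)) \<union> {v. ord_arrow C ws j v}"
    proof cases
      case 1
      then show ?thesis using l jp unfolding crossing_def by auto
    next
      case 2
      then show ?thesis using l j jp sym[of l] unfolding crossing_def ord_arrow_def Jex_def by auto
    qed
  next
    fix l assume "l \<in> (crossing C ws j \<inter> crossing C ws (jplus ws j)) \<union> {v. ord_arrow C ws j v}"
    then show "l \<in> crossing C ws (jplus ws j)"
      using jp sym[of l] unfolding crossing_def ord_arrow_def by auto
  qed
qed

lemma ord_arrow_in_disjoint_crossing_jplus:
  "{u. ord_arrow C ws u j} \<inter> crossing C ws (jplus ws j) = {}"
  unfolding crossing_def ord_arrow_def by auto

lemma ord_arrow_out_disjoint_crossing: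
  "{v. ord_arrow C ws j v} \<inter> crossing C ws j = {}"
  unfolding crossing_def ord_arrow_def by auto

lemma finite_ord_arrow_in: "finite {u. ord_arrow C ws u j}"
  unfolding ord_arrow_def by (auto intro: finite_subset[of _ "{..length ws}"])

lemma finite_ord_arrow_out: "finite {v. ord_arrow C ws j v}"
  unfolding ord_arrow_def by (auto intro: finite_subset[of _ "{..length ws}"])

lemma sum_crossing_split_in:
  assumes "j \<in> Jex ws" "C (letter ws j) (letter ws j) \<noteq> -1"
  shows "sum P (crossing C ws j) =
           sum P (crossing C ws j \<inter> crossing C ws (jplus ws j)) + sum P {u. ord_arrow C ws u j}"
proof -
  have "sum P (crossing C ws j) =
          sum P ((crossing C ws j \<inter> crossing C ws (jplus ws j)) \<union> {u. ord_arrow C ws u j})"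
    using crossing_split_in[where C = C, OF assms] by simp
  also have "\<dots> = sum P (crossing C ws j \<inter> crossing C ws (jplus ws j)) + sum P {u. ord_arrow C ws u j}"
    using ord_arrow_in_disjoint_crossing_jplus[of C ws j]
    by (intro sum.union_disjoint) (auto simp: finite_crossing finite_ord_arrow_in)
  finally show ?thesis .
qed

lemma sum_crossing_jplus_split_out:
  assumes "j \<in> Jex ws" "C (letter ws j) (letter ws j) \<noteq> -1"
    and "\<And>l. l \<in> {1..length ws} \<Longrightarrow> C (letter ws l) (letter ws j) = C (letter ws j) (letter ws l)"
  shows "sum P (crossing C ws (jplus ws j)) =
           sum P (crossing C ws j \<inter> crossing C ws (jplus ws j)) + sum P {v. ord_arrow C ws j v}"
proof -
  have "sum P (crossing C ws (jplus ws j)) =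
          sum P ((crossing C ws j \<inter> crossing C ws (jplus ws j)) \<union> {v. ord_arrow C ws j v})"
    using crossing_jplus_split_out[where C = C, OF assms] by simp
  also have "\<dots> = sum P (crossing C ws j \<inter> crossing C ws (jplus ws j)) + sum P {v. ord_arrow C ws j v}"
    using ord_arrow_out_disjoint_crossing[of C ws j]
    by (intro sum.union_disjoint) (auto simp: finite_crossing finite_ord_arrow_out)
  finally show ?thesis .
qed

lemma letter_in_vertices:
  assumes "reduced_w0 n C ws" "l \<in> {1..length ws}"
  shows "letter ws l \<in> {1..n}"
proof -
  have "ws ! (l - 1) \<in> set ws" using assms(2) by (intro nth_mem) auto
  then show ?thesis using assms(1) unfolding reduced_w0_def letter_def by blast
qed

lemma simply_laced_simple_cartan_diag:
  "simply_laced_simple_cartan n C \<Longrightarrow> i \<in> {1..n} \<Longrightarrow> C i i = 2"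
  unfolding simply_laced_simple_cartan_def by auto

lemma simply_laced_simple_cartan_sym:
  "simply_laced_simple_cartan n C \<Longrightarrow> i \<in> {1..n} \<Longrightarrow> k \<in> {1..n} \<Longrightarrow> C i k = C k i"
  unfolding simply_laced_simple_cartan_def by (cases "i = k") auto

lemma add_exchange_cancel:
  fixes p q r a b x y z :: "'a::cancel_comm_monoid_add"
  assumes "p + q = a + x + y" and "r + p = b + x + z"
  shows "a + (r + y) = b + (q + z)"
proof -
  have "x + (a + (r + y)) = (a + x + y) + r" by (simp add: ac_simps)
  also have "\<dots> = (r + p) + q" unfolding assms(1)[symmetric] by (simp add: ac_simps)
  also have "\<dots> = x + (b + (q + z))" unfolding assms(2) by (simp add: ac_simps)
  finally show ?thesis by simp
qed

theorem lemma6p3: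
  fixes n :: nat and C :: "nat \<Rightarrow> nat \<Rightarrow> int" and ws :: "nat list"
    and P :: "nat \<Rightarrow> lform multiset"
  assumes cartan: "simply_laced_simple_cartan n C"
    and red: "reduced_w0 n C ws"
    and A: "\<forall>j\<in>{1..length ws}. \<forall>b\<in>#P j. b \<in> pos_roots n C"
    and B: "\<forall>j\<in>{1..length ws}. P j + Pext P (jminus ws j) =
              {#beta n C ws j#} +
              (\<Sum>l\<in>{l. 1 \<le> l \<and> l \<le> length ws \<and> l < j \<and> j < jplus ws l \<and>
                       C (letter ws l) (letter ws j) = -1}. P l)"
    and Cprop: "\<forall>j\<in>Jex ws. \<forall>i\<in>{1..length ws}.
              int (count (P j) (beta n C ws i)) - int (count (P (jplus ws j)) (beta n C ws i)) \<le> 1"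
  shows "\<forall>j\<in>Jex ws. {#beta n C ws j#} + P_in C ws P j
                    = {#beta n C ws (jplus ws j)#} + P_out C ws P j"
proof
  fix j assume j: "j \<in> Jex ws"
  then have j_pos: "j \<in> {1..length ws}" and jp_pos: "jplus ws j \<in> {1..length ws}"
    using jplus_gt[of ws j] unfolding Jex_def by auto
  have diag: "C (letter ws j) (letter ws j) \<noteq> -1"
    using simply_laced_simple_cartan_diag[OF cartan letter_in_vertices[OF red j_pos]] by simp
  have sym: "C (letter ws l) (letter ws j) = C (letter ws j) (letter ws l)" if "l \<in> {1..length ws}" for l
    using simply_laced_simple_cartan_sym[OF cartan] letter_in_vertices[OF red] that j_pos by blast
  have B_j: "P j + Pext P (jminus ws j) = {#beta n C ws j#} + sum P (crossing C ws j)"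
    using B j_pos unfolding crossing_def by blast
  have "P (jplus ws j) + Pext P (jminus ws (jplus ws j)) =
          {#beta n C ws (jplus ws j)#} + sum P (crossing C ws (jplus ws j))"
    using B jp_pos unfolding crossing_def by blast
  then have B_jplus: "P (jplus ws j) + P j =
                        {#beta n C ws (jplus ws j)#} + sum P (crossing C ws (jplus ws j))"
    using jminus_jplus[of j ws] j_pos jp_pos unfolding Pext_def by simp
  show "{#beta n C ws j#} + P_in C ws P j = {#beta n C ws (jplus ws j)#} + P_out C ws P j"
    unfolding P_in_def P_out_def
    using B_j B_jplus sum_crossing_split_in[where C = C and P = P, OF j diag]
      sum_crossing_jplus_split_out[where C = C and P = P, OF j diag sym]
    by (intro add_exchange_cancel) (simp_all add: add.assoc)
qed

end
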